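(* Let $(X_n)_{n\le0}$ be a strongly monotonic Markov process with values in $[0,1]^d$, let $\rho(x,x')=\sum_{k=1}^d a_k|x(k)-x'(k)|$ where $(a_k)$ are positive numbers with $\sum_k a_k=1$, and let $\delta$ be the distance $\delta(s,t)=|s-t|$ on $\mathbb{R}$. Then for every $\ell\le n\le 0$ and all $x_\ell,x'_\ell\in A_\ell$, $$\rho'\big(\mathcal{L}(X_n\mid X_\ell=x_\ell),\mathcal{L}(X_n\mid X_\ell=x'_\ell)\big)=\sum_{k=1}^d a_k\,\delta'\Big(\mathcal{L}\big(X_n(k)\mid X_\ell(k)=x_\ell(k)\big),\mathcal{L}\big(X_n(k)\mid X_\ell(k)=x'_\ell(k)\big)\Big).$$
   Context: $d\ge1$ integer or $d=\infty$; $A_n$ is the support of the law of $X_n$. For a pseudometric $\rho$, $\rho'(\mu,\nu)=\inf\mathbb{E}[\rho(X_\mu,X_\nu)]$ over all couplings of $\mu,\nu$ (Kantorovich pseudometric). An $\mathbb{R}^d$-valued Markov process is monotonic if for each $n<0$ and all $x,x'\in A_n$ there is a coupling $(Y,Y')$ of $\mathcal{L}(X_{n+1}\mid X_n=x)$ and $\mathcal{L}(X_{n+1}\mid X_n=x')$, with law depending measurably on $(x,x')$, such that for each coordinate $k$: $x(k)\le x'(k)\Rightarrow Y(k)\le Y'(k)$ a.s. and $x(k)\ge x'(k)\Rightarrow Y(k)\ge Y'(k)$ a.s. It is strongly monotonic if moreover each coordinate process $(X_n(k))_{n\le0}$ is Markovian and its natural filtration $\mathcal F(k)$ is immersed in the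 natural filtration $\mathcal{F}$ of $(X_n)$ (i.e. $\mathcal F_n(k)\subset\mathcal F_n$ and $\mathcal F_{n+1}(k)$ is conditionally independent of $\mathcal F_n$ given $\mathcal F_n(k)$). *)

theory Defs
  imports "HOL-Probability.Probability"
begin

text \<open>Kernel model of a Markov process indexed by the non-positive integers with values in
  the function space (index type 'd, finite or countably infinite, carrying the product
  topology and its Borel sigma-algebra).  mu n is the law of X_n (n \<le> 0) and
  P n x = L(X_{n+1} | X_n = x) (n < 0) is the one-step transition kernel.\<close>

definition support_of :: "'a::topological_space measure \<Rightarrow> 'a set" where
  "support_of \<mu> = {x. \<forall>U. open U \<and> x \<in> U \<longrightarrow> emeasure \<mu> U > 0}"

fun kiter :: "(int \<Rightarrow> 'a \<Rightarrow> 'a measure) \<Rightarrow> 'a measure \<Rightarrow> int \<Rightarrow> nat \<Rightarrow> 'a \<Rightarrow> 'a measure" where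
  "kiter P S l 0 x = return S x"
| "kiter P S l (Suc j) x = bind (kiter P S l j x) (P (l + int j))"

definition cond_law :: "(int \<Rightarrow> 'a \<Rightarrow> 'a measure) \<Rightarrow> 'a measure \<Rightarrow> int \<Rightarrow> int \<Rightarrow> 'a \<Rightarrow> 'a measure" where
  "cond_law P S l n x = kiter P S l (nat (n - l)) x"

definition couplings :: "'a measure \<Rightarrow> 'b measure \<Rightarrow> ('a \<times> 'b) measure set" where
  "couplings \<mu> \<nu> = {\<pi>. sets \<pi> = sets (\<mu> \<Otimes>\<^sub>M \<nu>) \<and> prob_space \<pi> \<and>
      distr \<pi> \<mu> fst = \<mu> \<and> distr \<pi> \<nu> snd = \<nu>}"

definition kantorovich :: "('a \<Rightarrow> 'a \<Rightarrow> real) \<Rightarrow> 'a measure \<Rightarrow> 'a measure \<Rightarrow> ennreal" where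
  "kantorovich \<rho> \<mu> \<nu> = (INF \<pi> \<in> couplings \<mu> \<nu>. \<integral>\<^sup>+ z. ennreal (\<rho> (fst z) (snd z)) \<partial>\<pi>)"

definition weighted_l1 :: "('d \<Rightarrow> real) \<Rightarrow> ('d \<Rightarrow> real) \<Rightarrow> ('d \<Rightarrow> real) \<Rightarrow> real" where
  "weighted_l1 a x x' = (\<Sum>\<^sub>\<infinity>k. a k * \<bar>x k - x' k\<bar>)"

text \<open>The last clause fixes the version of the conditional law: from a point of the support A_n
  the process jumps into the support A_{n+1} (true for almost every point for any version).\<close>
definition markov_cube :: "(int \<Rightarrow> ('d::countable \<Rightarrow> real) measure) \<Rightarrow>
    (int \<Rightarrow> ('d \<Rightarrow> real) \<Rightarrow> ('d \<Rightarrow> real) measure) \<Rightarrow> bool" where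
  "markov_cube mu P \<longleftrightarrow>
     (\<forall>n\<le>0. prob_space (mu n) \<and> sets (mu n) = sets borel \<and>
             (AE y in mu n. \<forall>k. y k \<in> {0..1})) \<and>
     (\<forall>n<0. P n \<in> borel \<rightarrow>\<^sub>M prob_algebra borel \<and>
            mu (n + 1) = bind (mu n) (P n) \<and>
            (\<forall>x\<in>support_of (mu n). AE y in P n x. y \<in> support_of (mu (n + 1))))"

definition monotonic :: "(int \<Rightarrow> ('d::countable \<Rightarrow> real) measure) \<Rightarrow>
    (int \<Rightarrow> ('d \<Rightarrow> real) \<Rightarrow> ('d \<Rightarrow> real) measure) \<Rightarrow> bool" where
  "monotonic mu P \<longleftrightarrow>
     (\<forall>n<0. \<exists>C :: ('d \<Rightarrow> real) \<times> ('d \<Rightarrow> real) \<Rightarrow> (('d \<Rightarrow> real) \<times> ('d \<Rightarrow> real)) measure.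
        C \<in> (borel \<Otimes>\<^sub>M borel) \<rightarrow>\<^sub>M prob_algebra (borel \<Otimes>\<^sub>M borel) \<and>
        (\<forall>x\<in>support_of (mu n). \<forall>x'\<in>support_of (mu n).
           distr (C (x, x')) borel fst = P n x \<and> distr (C (x, x')) borel snd = P n x' \<and>
           (\<forall>k. (x k \<le> x' k \<longrightarrow> (AE z in C (x, x'). fst z k \<le> snd z k)) \<and>
                (x k \<ge> x' k \<longrightarrow> (AE z in C (x, x'). fst z k \<ge> snd z k)))))"

text \<open>Strong monotonicity: each coordinate process is Markov with transition kernels Q k n
  (Q k n s = L(X_{n+1}(k) | X_n(k) = s)) and its filtration is immersed in that of X, i.e.
  the law of X_{n+1}(k) given the whole X_n = x depends only on x(k) and equals Q k n (x k).\<close>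
definition strongly_monotonic :: "(int \<Rightarrow> ('d::countable \<Rightarrow> real) measure) \<Rightarrow>
    (int \<Rightarrow> ('d \<Rightarrow> real) \<Rightarrow> ('d \<Rightarrow> real) measure) \<Rightarrow> ('d \<Rightarrow> int \<Rightarrow> real \<Rightarrow> real measure) \<Rightarrow> bool" where
  "strongly_monotonic mu P Q \<longleftrightarrow> monotonic mu P \<and>
     (\<forall>k. \<forall>n<0. Q k n \<in> borel \<rightarrow>\<^sub>M prob_algebra borel \<and>
        (\<forall>x\<in>support_of (mu n). distr (P n x) borel (\<lambda>y. y k) = Q k n (x k)))"

end

theory Submission
  imports Defs
begin

text \<open>Composing the one-step order-preserving couplings along the chain gives a coupling of
  L(X_n | X_l = x) and L(X_n | X_l = x') under which, for every coordinate k, the difference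
  X_n(k) - X'_n(k) has the constant sign of x(k) - x'(k). For a coupling with this property
  E|X_n(k) - X'_n(k)| equals |E X_n(k) - E X'_n(k)|, which bounds the transport cost of every
  coupling of the two coordinate laws from below. So this single coupling is optimal for delta in
  every coordinate at once, and hence also for rho, a nonnegative combination of the coordinate
  costs. Strong monotonicity identifies the coordinate laws of the chain with the laws of the
  coordinate chains.\<close>

section \<open>Supports of Borel measures\<close>

lemma closed_support_of: "closed (support_of (\<mu> :: 'a::topological_space measure))"
  unfolding closed_def open_subopen[of "- support_of \<mu>"]
  by (force simp: support_of_def)

lemma support_of_subset:
  assumes "sets \<mu> = sets borel" and "AE y in \<mu>. y \<in> F" and "closed F"
  shows "support_of \<mu> \<subseteq> F"
proof
  fix x assume x: "x \<in> support_of \<mu>"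
  show "x \<in> F"
  proof (rule ccontr)
    assume "x \<notin> F"
    have "- F \<in> sets \<mu>" using assms(1,3) by auto
    then have "emeasure \<mu> (- F) = 0"
      using assms(2) by (simp add: AE_iff_measurable[OF _ refl] Compl_eq
        sets_eq_imp_space_eq[OF assms(1)])
    with x \<open>x \<notin> F\<close> assms(3) show False by (auto simp: support_of_def)
  qed
qed

section \<open>Iterated kernels\<close>

lemma kiter_in_prob_algebra:
  assumes "\<And>i. i < l + int j \<Longrightarrow> P i \<in> M \<rightarrow>\<^sub>M prob_algebra M" and "x \<in> space M"
  shows "kiter P M l j x \<in> space (prob_algebra M)"
  using assms(1)
proof (induction j)
  case 0
  show ?case using assms(2) by (simp add: space_prob_algebra prob_space_return)
next
  case (Suc j)
  then have "kiter P M l j x \<in> space (prob_algebra M)" and "P (l + int j) \<in> M \<rightarrow>\<^sub>M prob_algebra M"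
    by simp_all
  then show ?case
    by (simp add: space_prob_algebra prob_space_bind' sets_bind')
qed

lemma AE_kiter_invariant:
  assumes P: "\<And>i. i < l + int j \<Longrightarrow> P i \<in> M \<rightarrow>\<^sub>M prob_algebra M"
    and S[measurable]: "\<And>i. S i \<in> sets M"
    and step: "\<And>i y. i < l + int j \<Longrightarrow> y \<in> S i \<Longrightarrow> AE z in P i y. z \<in> S (i + 1)"
    and x: "x \<in> S l"
  shows "AE y in kiter P M l j x. y \<in> S (l + int j)"
  using P step
proof (induction j)
  case 0
  have "x \<in> space M" using sets.sets_into_space[OF S] x by blast
  then have "(AE y in return M x. y \<in> S l) \<longleftrightarrow> x \<in> S l"
    by (intro AE_return) measurable
  then show ?case using x by (simp only: kiter.simps) simp
next
  case (Suc j)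
  let ?i = "l + int j"
  have P_i: "P ?i \<in> kiter P M l j x \<rightarrow>\<^sub>M subprob_algebra M"
  proof -
    have "x \<in> space M" using sets.sets_into_space[OF S] x by blast
    then have sets_K: "sets (kiter P M l j x) = sets M"
      using kiter_in_prob_algebra[of l j P M x] Suc.prems(1) by (simp add: space_prob_algebra)
    show ?thesis
      unfolding measurable_cong_sets[OF sets_K refl] using Suc.prems(1)
      by (intro measurable_prob_algebraD) simp
  qed
  have "AE y in kiter P M l j x. y \<in> S ?i" using Suc by simp
  then have "AE y in kiter P M l j x. AE z in P ?i y. z \<in> S (?i + 1)"
    by eventually_elim (rule Suc.prems(2); simp)
  moreover have "Measurable.pred M (\<lambda>z. z \<in> S (l + int (Suc j)))" by measurable
  ultimately show ?case
    unfolding kiter.simps by (subst AE_bind[OF P_i]) (simp_all add: ac_simps)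
qed

lemma distr_kiter:
  assumes P: "\<And>i. i < l + int j \<Longrightarrow> P i \<in> M \<rightarrow>\<^sub>M prob_algebra M"
    and R: "\<And>i. i < l + int j \<Longrightarrow> R i \<in> N \<rightarrow>\<^sub>M prob_algebra N"
    and f: "f \<in> M \<rightarrow>\<^sub>M N"
    and S: "\<And>i. S i \<in> sets M"
    and step: "\<And>i y. i < l + int j \<Longrightarrow> y \<in> S i \<Longrightarrow> AE z in P i y. z \<in> S (i + 1)"
    and PR: "\<And>i y. i < l + int j \<Longrightarrow> y \<in> S i \<Longrightarrow> distr (P i y) N f = R i (f y)"
    and x: "x \<in> S l"
  shows "distr (kiter P M l j x) N f = kiter R N l j (f x)"
  using P R step PR
proof (induction j)
  case 0
  have "x \<in> space M" using sets.sets_into_space[OF S] x by blast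
  then show ?case using f by (simp add: distr_return)
next
  case (Suc j)
  let ?i = "l + int j" and ?K = "kiter P M l j x"
  have "x \<in> space M" using sets.sets_into_space[OF S] x by blast
  then have K: "?K \<in> space (prob_algebra M)"
    using kiter_in_prob_algebra[of l j P M x] Suc.prems(1) by simp
  then have sets_K: "sets ?K = sets M" and "space ?K \<noteq> {}"
    by (auto simp: space_prob_algebra prob_space.not_empty)
  have P_i: "P ?i \<in> M \<rightarrow>\<^sub>M prob_algebra M" and R_i: "R ?i \<in> N \<rightarrow>\<^sub>M prob_algebra N"
    using Suc.prems(1,2) by simp_all
  have f_K: "f \<in> ?K \<rightarrow>\<^sub>M N" unfolding measurable_cong_sets[OF sets_K refl] by (rule f)
  have "AE y in ?K. y \<in> S ?i"
    using AE_kiter_invariant[of l j P M S, OF _ S _ x] Suc.prems(1,3) by simp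
  then have PR_K: "AE y in ?K. distr (P ?i y) N f = R ?i (f y)"
    by eventually_elim (rule Suc.prems(4); simp)
  have P_K: "P ?i \<in> ?K \<rightarrow>\<^sub>M subprob_algebra M"
    unfolding measurable_cong_sets[OF sets_K refl] by (rule measurable_prob_algebraD[OF P_i])
  have "distr (kiter P M l (Suc j) x) N f = ?K \<bind> (\<lambda>y. distr (P ?i y) N f)"
    using distr_bind[OF P_K \<open>space ?K \<noteq> {}\<close> f] by simp
  also have "\<dots> = ?K \<bind> (\<lambda>y. R ?i (f y))"
    by (rule bind_cong_AE'[OF K _ measurable_compose[OF f R_i] PR_K])
       (rule measurable_compose[OF P_i measurable_distr_prob_space[OF f]])
  also have "\<dots> = distr ?K N f \<bind> R ?i"
    by (rule bind_distr[OF f_K measurable_prob_algebraD[OF R_i] \<open>space ?K \<noteq> {}\<close>, symmetric])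
  also have "\<dots> = kiter R N l (Suc j) (f x)"
    using Suc by simp
  finally show ?case .
qed

section \<open>Couplings and the Kantorovich distance on the line\<close>

lemma sets_couplings:
  assumes "\<pi> \<in> couplings \<mu> \<nu>" and "sets \<mu> = sets M" and "sets \<nu> = sets N"
  shows "sets \<pi> = sets (M \<Otimes>\<^sub>M N)"
proof -
  have "sets \<pi> = sets (\<mu> \<Otimes>\<^sub>M \<nu>)" using assms(1) unfolding couplings_def by blast
  also have "\<dots> = sets (M \<Otimes>\<^sub>M N)" by (rule sets_pair_measure_cong[OF assms(2,3)])
  finally show ?thesis .
qed

lemma couplings_measurable_fst:
  assumes "\<pi> \<in> couplings \<mu> \<nu>"
  shows "fst \<in> \<pi> \<rightarrow>\<^sub>M \<mu>"
proof -
  have sets_\<pi>: "sets \<pi> = sets (\<mu> \<Otimes>\<^sub>M \<nu>)" using assms unfolding couplings_def by blast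
  show ?thesis unfolding measurable_cong_sets[OF sets_\<pi> refl] by simp
qed

lemma couplings_measurable_snd:
  assumes "\<pi> \<in> couplings \<mu> \<nu>"
  shows "snd \<in> \<pi> \<rightarrow>\<^sub>M \<nu>"
proof -
  have sets_\<pi>: "sets \<pi> = sets (\<mu> \<Otimes>\<^sub>M \<nu>)" using assms unfolding couplings_def by blast
  show ?thesis unfolding measurable_cong_sets[OF sets_\<pi> refl] by simp
qed

lemma AE_couplings_fst:
  assumes \<pi>: "\<pi> \<in> couplings \<mu> \<nu>" and "AE y in \<mu>. P y"
  shows "AE z in \<pi>. P (fst z)"
proof (rule AE_distrD[OF couplings_measurable_fst[OF \<pi>]])
  have marginal: "distr \<pi> \<mu> fst = \<mu>" using \<pi> unfolding couplings_def by blast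
  show "AE y in distr \<pi> \<mu> fst. P y" unfolding marginal by (rule assms(2))
qed

lemma AE_couplings_snd:
  assumes \<pi>: "\<pi> \<in> couplings \<mu> \<nu>" and "AE y in \<nu>. P y"
  shows "AE z in \<pi>. P (snd z)"
proof (rule AE_distrD[OF couplings_measurable_snd[OF \<pi>]])
  have marginal: "distr \<pi> \<nu> snd = \<nu>" using \<pi> unfolding couplings_def by blast
  show "AE y in distr \<pi> \<nu> snd. P y" unfolding marginal by (rule assms(2))
qed

lemma couplings_integral_fst:
  fixes f :: "'a \<Rightarrow> real"
  assumes \<pi>: "\<pi> \<in> couplings \<mu> \<nu>" and f: "integrable \<mu> f"
  shows "integrable \<pi> (\<lambda>z. f (fst z))" and "(\<integral>z. f (fst z) \<partial>\<pi>) = (\<integral>y. f y \<partial>\<mu>)"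
proof -
  have fst_\<pi>: "distr \<pi> \<mu> fst = \<mu>" using \<pi> unfolding couplings_def by blast
  note fst = couplings_measurable_fst[OF \<pi>]
  show "integrable \<pi> (\<lambda>z. f (fst z))"
    using integrable_distr_eq[OF fst borel_measurable_integrable[OF f]] f fst_\<pi> by simp
  show "(\<integral>z. f (fst z) \<partial>\<pi>) = (\<integral>y. f y \<partial>\<mu>)"
    using integral_distr[OF fst borel_measurable_integrable[OF f]] fst_\<pi> by simp
qed

lemma couplings_integral_snd:
  fixes g :: "'b \<Rightarrow> real"
  assumes \<pi>: "\<pi> \<in> couplings \<mu> \<nu>" and g: "integrable \<nu> g"
  shows "integrable \<pi> (\<lambda>z. g (snd z))" and "(\<integral>z. g (snd z) \<partial>\<pi>) = (\<integral>y. g y \<partial>\<nu>)"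
proof -
  have snd_\<pi>: "distr \<pi> \<nu> snd = \<nu>" using \<pi> unfolding couplings_def by blast
  note snd = couplings_measurable_snd[OF \<pi>]
  show "integrable \<pi> (\<lambda>z. g (snd z))"
    using integrable_distr_eq[OF snd borel_measurable_integrable[OF g]] g snd_\<pi> by simp
  show "(\<integral>z. g (snd z) \<partial>\<pi>) = (\<integral>y. g y \<partial>\<nu>)"
    using integral_distr[OF snd borel_measurable_integrable[OF g]] snd_\<pi> by simp
qed

lemma couplings_distr:
  assumes \<pi>: "\<pi> \<in> couplings \<mu> \<nu>" and f: "f \<in> \<mu> \<rightarrow>\<^sub>M M" and g: "g \<in> \<nu> \<rightarrow>\<^sub>M N"
  shows "distr \<pi> (M \<Otimes>\<^sub>M N) (\<lambda>z. (f (fst z), g (snd z))) \<in> couplings (distr \<mu> M f) (distr \<nu> N g)"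
proof -
  have "prob_space \<pi>" and fst_\<pi>: "distr \<pi> \<mu> fst = \<mu>" and snd_\<pi>: "distr \<pi> \<nu> snd = \<nu>"
    using \<pi> unfolding couplings_def by blast+
  note fst = couplings_measurable_fst[OF \<pi>] and snd = couplings_measurable_snd[OF \<pi>]
  let ?h = "\<lambda>z. (f (fst z), g (snd z))"
  have h: "?h \<in> \<pi> \<rightarrow>\<^sub>M M \<Otimes>\<^sub>M N"
    by (rule measurable_Pair[OF measurable_compose[OF fst f] measurable_compose[OF snd g]])
  have fst_marginal: "distr (distr \<pi> (M \<Otimes>\<^sub>M N) ?h) (distr \<mu> M f) fst = distr \<mu> M f"
  proof -
    have "distr (distr \<pi> (M \<Otimes>\<^sub>M N) ?h) (distr \<mu> M f) fst = distr (distr \<pi> (M \<Otimes>\<^sub>M N) ?h) M fst"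
      by (rule distr_cong) simp_all
    also have "\<dots> = distr \<pi> M (fst \<circ> ?h)"
      by (rule distr_distr[OF measurable_fst h])
    also have "\<dots> = distr (distr \<pi> \<mu> fst) M f"
      unfolding distr_distr[OF f fst] by (simp add: comp_def)
    finally show ?thesis unfolding fst_\<pi> .
  qed
  have snd_marginal: "distr (distr \<pi> (M \<Otimes>\<^sub>M N) ?h) (distr \<nu> N g) snd = distr \<nu> N g"
  proof -
    have "distr (distr \<pi> (M \<Otimes>\<^sub>M N) ?h) (distr \<nu> N g) snd = distr (distr \<pi> (M \<Otimes>\<^sub>M N) ?h) N snd"
      by (rule distr_cong) simp_all
    also have "\<dots> = distr \<pi> N (snd \<circ> ?h)"
      by (rule distr_distr[OF measurable_snd h])
    also have "\<dots> = distr (distr \<pi> \<nu> snd) N g"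
      unfolding distr_distr[OF g snd] by (simp add: comp_def)
    finally show ?thesis unfolding snd_\<pi> .
  qed
  have "sets (distr \<pi> (M \<Otimes>\<^sub>M N) ?h) = sets (distr \<mu> M f \<Otimes>\<^sub>M distr \<nu> N g)"
    using sets_pair_measure_cong[of "distr \<mu> M f" M "distr \<nu> N g" N] by simp
  with fst_marginal snd_marginal prob_space.prob_space_distr[OF \<open>prob_space \<pi>\<close> h] show ?thesis
    unfolding couplings_def by blast
qed

lemma ennreal_abs_integral_diff_le:
  fixes f g :: "'a \<Rightarrow> real"
  assumes "integrable M f" and "integrable M g"
  shows "ennreal \<bar>integral\<^sup>L M f - integral\<^sup>L M g\<bar> \<le> (\<integral>\<^sup>+ z. ennreal \<bar>f z - g z\<bar> \<partial>M)"
proof -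
  have "\<bar>integral\<^sup>L M f - integral\<^sup>L M g\<bar> = \<bar>\<integral>z. f z - g z \<partial>M\<bar>" using assms by simp
  also have "\<dots> \<le> (\<integral>z. \<bar>f z - g z\<bar> \<partial>M)" by (rule integral_abs_bound)
  finally have "ennreal \<bar>integral\<^sup>L M f - integral\<^sup>L M g\<bar> \<le> ennreal (\<integral>z. \<bar>f z - g z\<bar> \<partial>M)"
    by (rule ennreal_leI)
  also have "\<dots> = (\<integral>\<^sup>+ z. ennreal \<bar>f z - g z\<bar> \<partial>M)"
    using assms by (intro nn_integral_eq_integral[symmetric]) auto
  finally show ?thesis .
qed

lemma nn_integral_abs_diff_eq_of_ordered:
  fixes f g :: "'a \<Rightarrow> real"
  assumes "integrable M f" and "integrable M g"
    and "(AE z in M. f z \<le> g z) \<or> (AE z in M. g z \<le> f z)"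
  shows "(\<integral>\<^sup>+ z. ennreal \<bar>f z - g z\<bar> \<partial>M) = ennreal \<bar>integral\<^sup>L M f - integral\<^sup>L M g\<bar>"
proof -
  have ordered: "(\<integral>\<^sup>+ z. ennreal \<bar>f z - g z\<bar> \<partial>M) = ennreal \<bar>integral\<^sup>L M f - integral\<^sup>L M g\<bar>"
    if f: "integrable M f" and g: "integrable M g" and le: "AE z in M. f z \<le> g z" for f g
  proof -
    have "(\<integral>\<^sup>+ z. ennreal \<bar>f z - g z\<bar> \<partial>M) = (\<integral>\<^sup>+ z. ennreal (g z - f z) \<partial>M)"
      using le by (intro nn_integral_cong_AE) (auto elim!: eventually_mono)
    also have "\<dots> = ennreal (\<integral>z. g z - f z \<partial>M)"
      using f g le by (intro nn_integral_eq_integral) (auto elim!: eventually_mono)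
    also have "(\<integral>z. g z - f z \<partial>M) = \<bar>integral\<^sup>L M f - integral\<^sup>L M g\<bar>"
      using f g integral_mono_AE[OF f g le] by simp
    finally show ?thesis .
  qed
  from assms(3) show ?thesis
  proof
    assume "AE z in M. g z \<le> f z"
    have "(\<integral>\<^sup>+ z. ennreal \<bar>f z - g z\<bar> \<partial>M) = (\<integral>\<^sup>+ z. ennreal \<bar>g z - f z\<bar> \<partial>M)"
      by (simp only: abs_minus_commute)
    also have "\<dots> = ennreal \<bar>integral\<^sup>L M g - integral\<^sup>L M f\<bar>"
      using ordered[OF assms(2,1)] \<open>AE z in M. g z \<le> f z\<close> .
    finally show ?thesis by (simp only: abs_minus_commute)
  qed (rule ordered[OF assms(1,2)])
qed

lemma kantorovich_abs_ge_abs_mean_diff: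
  fixes \<mu> \<nu> :: "real measure"
  assumes "integrable \<mu> (\<lambda>s. s)" and "integrable \<nu> (\<lambda>t. t)"
  shows "ennreal \<bar>(\<integral>s. s \<partial>\<mu>) - (\<integral>t. t \<partial>\<nu>)\<bar> \<le> kantorovich (\<lambda>s t. \<bar>s - t\<bar>) \<mu> \<nu>"
  unfolding kantorovich_def
proof (rule INF_greatest)
  fix \<pi> assume \<pi>: "\<pi> \<in> couplings \<mu> \<nu>"
  from ennreal_abs_integral_diff_le[OF couplings_integral_fst(1)[OF \<pi> assms(1)]
      couplings_integral_snd(1)[OF \<pi> assms(2)]]
  show "ennreal \<bar>(\<integral>s. s \<partial>\<mu>) - (\<integral>t. t \<partial>\<nu>)\<bar> \<le> (\<integral>\<^sup>+ z. ennreal \<bar>fst z - snd z\<bar> \<partial>\<pi>)"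
    unfolding couplings_integral_fst(2)[OF \<pi> assms(1)] couplings_integral_snd(2)[OF \<pi> assms(2)] .
qed

lemma kantorovich_abs_eq_ordered_coupling:
  fixes \<mu> \<nu> :: "real measure"
  assumes \<pi>: "\<pi> \<in> couplings \<mu> \<nu>"
    and "integrable \<mu> (\<lambda>s. s)" and "integrable \<nu> (\<lambda>t. t)"
    and "(AE z in \<pi>. fst z \<le> snd z) \<or> (AE z in \<pi>. snd z \<le> fst z)"
  shows "kantorovich (\<lambda>s t. \<bar>s - t\<bar>) \<mu> \<nu> = (\<integral>\<^sup>+ z. ennreal \<bar>fst z - snd z\<bar> \<partial>\<pi>)"
proof (rule antisym)
  show "kantorovich (\<lambda>s t. \<bar>s - t\<bar>) \<mu> \<nu> \<le> (\<integral>\<^sup>+ z. ennreal \<bar>fst z - snd z\<bar> \<partial>\<pi>)"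
    unfolding kantorovich_def by (rule INF_lower[OF \<pi>])
  have "(\<integral>\<^sup>+ z. ennreal \<bar>fst z - snd z\<bar> \<partial>\<pi>) = ennreal \<bar>(\<integral>s. s \<partial>\<mu>) - (\<integral>t. t \<partial>\<nu>)\<bar>"
    using nn_integral_abs_diff_eq_of_ordered[OF couplings_integral_fst(1)[OF \<pi> assms(2)]
        couplings_integral_snd(1)[OF \<pi> assms(3)] assms(4)]
    unfolding couplings_integral_fst(2)[OF \<pi> assms(2)] couplings_integral_snd(2)[OF \<pi> assms(3)] .
  also have "\<dots> \<le> kantorovich (\<lambda>s t. \<bar>s - t\<bar>) \<mu> \<nu>"
    by (rule kantorovich_abs_ge_abs_mean_diff[OF assms(2,3)])
  finally show "(\<integral>\<^sup>+ z. ennreal \<bar>fst z - snd z\<bar> \<partial>\<pi>) \<le> kantorovich (\<lambda>s t. \<bar>s - t\<bar>) \<mu> \<nu>" .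
qed

section \<open>The weighted l1 cost on the unit cube\<close>

lemma measurable_component_borel[measurable]:
  "(\<lambda>y::'d::countable \<Rightarrow> real. y k) \<in> borel_measurable borel"
  by (rule borel_measurable_continuous_onI) simp

definition unit_cube :: "('d \<Rightarrow> real) set" where
  "unit_cube = {y. \<forall>k. y k \<in> {0..1}}"

lemma closed_unit_cube: "closed unit_cube"
proof -
  have "unit_cube = (\<Inter>k. (\<lambda>y. y k) -` {0..1})"
    unfolding unit_cube_def by auto
  moreover have "closed ((\<lambda>y::'d \<Rightarrow> real. y k) -` {0..1})" for k
    by (intro closed_vimage closed_atLeastAtMost continuous_on_product_coordinates)
  ultimately show ?thesis by (metis closed_INT)
qed

lemma infsum_ennreal_countable_eq_suminf:
  fixes F :: "'d::countable \<Rightarrow> ennreal"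
  shows "infsum F UNIV = (\<Sum>n. if n \<in> range (to_nat :: 'd \<Rightarrow> nat) then F (from_nat n) else 0)"
proof -
  let ?I = "range (to_nat :: 'd \<Rightarrow> nat)"
  have infsum_nat: "infsum g UNIV = suminf g" for g :: "nat \<Rightarrow> ennreal"
    by (metis has_sum_imp_sums has_sum_infsum nonneg_summable_on_complete sums_unique zero_le)
  have "infsum F UNIV = infsum (F \<circ> from_nat) ?I"
    by (subst infsum_reindex) (auto simp: comp_def)
  also have "\<dots> = infsum (\<lambda>n. if n \<in> ?I then F (from_nat n) else 0) UNIV"
    by (subst infsum_cong_neutral[where T=UNIV and g="\<lambda>n. if n \<in> ?I then F (from_nat n) else 0"]) auto
  also have "\<dots> = (\<Sum>n. if n \<in> ?I then F (from_nat n) else 0)"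
    by (rule infsum_nat)
  finally show ?thesis .
qed

lemma nn_integral_infsum:
  fixes f :: "'d::countable \<Rightarrow> 'a \<Rightarrow> ennreal"
  assumes "\<And>k. f k \<in> borel_measurable M"
  shows "(\<integral>\<^sup>+ x. (\<Sum>\<^sub>\<infinity>k. f k x) \<partial>M) = (\<Sum>\<^sub>\<infinity>k. \<integral>\<^sup>+ x. f k x \<partial>M)"
proof -
  let ?I = "range (to_nat :: 'd \<Rightarrow> nat)"
  have "(\<integral>\<^sup>+ x. (\<Sum>\<^sub>\<infinity>k. f k x) \<partial>M) = (\<integral>\<^sup>+ x. (\<Sum>n. if n \<in> ?I then f (from_nat n) x else 0) \<partial>M)"
    by (simp add: infsum_ennreal_countable_eq_suminf)
  also have "\<dots> = (\<Sum>n. \<integral>\<^sup>+ x. (if n \<in> ?I then f (from_nat n) x else 0) \<partial>M)"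
  proof (rule nn_integral_suminf)
    show "(\<lambda>x. if n \<in> ?I then f (from_nat n) x else 0) \<in> borel_measurable M" for n
      by (cases "n \<in> ?I") (simp_all add: assms)
  qed
  also have "\<dots> = (\<Sum>n. if n \<in> ?I then \<integral>\<^sup>+ x. f (from_nat n) x \<partial>M else 0)"
    by (intro suminf_cong) auto
  also have "\<dots> = (\<Sum>\<^sub>\<infinity>k. \<integral>\<^sup>+ x. f k x \<partial>M)"
    by (simp add: infsum_ennreal_countable_eq_suminf)
  finally show ?thesis .
qed

lemma ennreal_infsum:
  fixes f :: "'a \<Rightarrow> real"
  assumes "f summable_on A" and "\<And>x. x \<in> A \<Longrightarrow> 0 \<le> f x"
  shows "ennreal (infsum f A) = (\<Sum>\<^sub>\<infinity>x\<in>A. ennreal (f x))"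
proof -
  have "sum (ennreal \<circ> f) F = ennreal (sum f F)" if "F \<subseteq> A" for F
    unfolding comp_def using that assms(2) by (intro sum_ennreal) auto
  then have "ennreal (infsum f A) = infsum (ennreal \<circ> f) A"
    by (simp add: infsum_comm_additive_general assms(1))
  then show ?thesis by (simp add: comp_def)
qed

lemma ennreal_weighted_l1:
  assumes a: "\<And>k. 0 \<le> a k" "a summable_on UNIV" and y: "y \<in> unit_cube" "y' \<in> unit_cube"
  shows "ennreal (weighted_l1 a y y') = (\<Sum>\<^sub>\<infinity>k. ennreal (a k) * ennreal \<bar>y k - y' k\<bar>)"
proof -
  have "\<bar>y k - y' k\<bar> \<le> 1" for k
  proof -
    have "y k \<in> {0..1}" "y' k \<in> {0..1}" using y unfolding unit_cube_def by blast+
    then show ?thesis by auto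
  qed
  then have "a k * \<bar>y k - y' k\<bar> \<le> a k" for k
    using a(1)[of k] by (simp add: mult_left_le)
  then have "(\<lambda>k. a k * \<bar>y k - y' k\<bar>) summable_on UNIV"
    by (rule summable_on_comparison_test[OF a(2)]) (simp add: a(1))
  then have "ennreal (weighted_l1 a y y') = (\<Sum>\<^sub>\<infinity>k. ennreal (a k * \<bar>y k - y' k\<bar>))"
    unfolding weighted_l1_def by (rule ennreal_infsum) (simp add: a(1))
  also have "\<dots> = (\<Sum>\<^sub>\<infinity>k. ennreal (a k) * ennreal \<bar>y k - y' k\<bar>)"
    using a(1) by (intro infsum_cong) (simp add: ennreal_mult)
  finally show ?thesis .
qed

lemma nn_integral_weighted_l1:
  fixes \<pi> :: "(('d::countable \<Rightarrow> real) \<times> ('d \<Rightarrow> real)) measure"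
  assumes a: "\<And>k. 0 \<le> a k" "a summable_on UNIV"
    and sets_\<pi>: "sets \<pi> = sets (borel \<Otimes>\<^sub>M borel)"
    and cube: "AE z in \<pi>. fst z \<in> unit_cube \<and> snd z \<in> unit_cube"
  shows "(\<integral>\<^sup>+ z. ennreal (weighted_l1 a (fst z) (snd z)) \<partial>\<pi>) =
    (\<Sum>\<^sub>\<infinity>k. ennreal (a k) * (\<integral>\<^sup>+ z. ennreal \<bar>fst z k - snd z k\<bar> \<partial>\<pi>))"
proof -
  have meas: "(\<lambda>z. ennreal \<bar>fst z k - snd z k\<bar>) \<in> borel_measurable \<pi>" for k
    unfolding measurable_cong_sets[OF sets_\<pi> refl] by measurable
  have "(\<integral>\<^sup>+ z. ennreal (weighted_l1 a (fst z) (snd z)) \<partial>\<pi>) =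
      (\<integral>\<^sup>+ z. (\<Sum>\<^sub>\<infinity>k. ennreal (a k) * ennreal \<bar>fst z k - snd z k\<bar>) \<partial>\<pi>)"
  proof (rule nn_integral_cong_AE)
    from cube show "AE z in \<pi>. ennreal (weighted_l1 a (fst z) (snd z)) =
        (\<Sum>\<^sub>\<infinity>k. ennreal (a k) * ennreal \<bar>fst z k - snd z k\<bar>)"
      by eventually_elim (simp add: ennreal_weighted_l1[OF a])
  qed
  also have "\<dots> = (\<Sum>\<^sub>\<infinity>k. \<integral>\<^sup>+ z. ennreal (a k) * ennreal \<bar>fst z k - snd z k\<bar> \<partial>\<pi>)"
    using meas by (intro nn_integral_infsum) simp
  also have "\<dots> = (\<Sum>\<^sub>\<infinity>k. ennreal (a k) * (\<integral>\<^sup>+ z. ennreal \<bar>fst z k - snd z k\<bar> \<partial>\<pi>))"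
    using meas by (intro infsum_cong nn_integral_cmult)
  finally show ?thesis .
qed

lemma integrable_distr_component:
  fixes \<mu> :: "('d::countable \<Rightarrow> real) measure"
  assumes "prob_space \<mu>" and "sets \<mu> = sets borel" and "AE y in \<mu>. y \<in> unit_cube"
  shows "integrable (distr \<mu> borel (\<lambda>y. y k)) (\<lambda>s. s)"
proof -
  interpret prob_space \<mu> by fact
  have component: "(\<lambda>y. y k) \<in> \<mu> \<rightarrow>\<^sub>M borel"
    unfolding measurable_cong_sets[OF assms(2) refl] by measurable
  from assms(3) have "AE y in \<mu>. norm (y k) \<le> 1"
    by eventually_elim (simp add: unit_cube_def)
  then have "integrable \<mu> (\<lambda>y. y k)"
    by (intro integrable_const_bound component)
  then show ?thesis
    by (simp add: integrable_distr_eq[OF component])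
qed

definition coordinate_coupling ::
    "(('d \<Rightarrow> real) \<times> ('d \<Rightarrow> real)) measure \<Rightarrow> 'd \<Rightarrow> (real \<times> real) measure" where
  "coordinate_coupling \<pi> k = distr \<pi> (borel \<Otimes>\<^sub>M borel) (\<lambda>z. (fst z k, snd z k))"

lemma couplings_coordinate_coupling:
  fixes \<mu> \<nu> :: "('d::countable \<Rightarrow> real) measure"
  assumes "\<pi> \<in> couplings \<mu> \<nu>" and "sets \<mu> = sets borel" and "sets \<nu> = sets borel"
  shows "coordinate_coupling \<pi> k \<in> couplings (distr \<mu> borel (\<lambda>y. y k)) (distr \<nu> borel (\<lambda>y. y k))"
proof -
  have "(\<lambda>y. y k) \<in> \<mu> \<rightarrow>\<^sub>M borel" and "(\<lambda>y. y k) \<in> \<nu> \<rightarrow>\<^sub>M borel"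
    unfolding measurable_cong_sets[OF assms(2) refl] measurable_cong_sets[OF assms(3) refl] by simp_all
  from couplings_distr[OF assms(1) this] show ?thesis
    unfolding coordinate_coupling_def .
qed

lemma nn_integral_coordinate_coupling:
  fixes \<pi> :: "(('d::countable \<Rightarrow> real) \<times> ('d \<Rightarrow> real)) measure"
  assumes "sets \<pi> = sets (borel \<Otimes>\<^sub>M borel)" and "g \<in> borel_measurable (borel \<Otimes>\<^sub>M borel)"
  shows "(\<integral>\<^sup>+ w. g w \<partial>coordinate_coupling \<pi> k) = (\<integral>\<^sup>+ z. g (fst z k, snd z k) \<partial>\<pi>)"
proof -
  have "(\<lambda>z. (fst z k, snd z k)) \<in> \<pi> \<rightarrow>\<^sub>M borel \<Otimes>\<^sub>M borel"
    unfolding measurable_cong_sets[OF assms(1) refl] by measurable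
  moreover have "g \<in> borel_measurable (distr \<pi> (borel \<Otimes>\<^sub>M borel) (\<lambda>z. (fst z k, snd z k)))"
    unfolding measurable_cong_sets[OF sets_distr refl] by (rule assms(2))
  ultimately show ?thesis
    unfolding coordinate_coupling_def by (rule nn_integral_distr)
qed

lemma nn_integral_weighted_l1_couplings:
  fixes \<mu> \<nu> :: "('d::countable \<Rightarrow> real) measure"
  assumes a: "\<And>k. 0 \<le> a k" "a summable_on UNIV"
    and laws: "sets \<mu> = sets borel" "sets \<nu> = sets borel"
    and cube: "AE y in \<mu>. y \<in> unit_cube" "AE y in \<nu>. y \<in> unit_cube"
    and \<pi>: "\<pi> \<in> couplings \<mu> \<nu>"
  shows "(\<integral>\<^sup>+ z. ennreal (weighted_l1 a (fst z) (snd z)) \<partial>\<pi>) =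
    (\<Sum>\<^sub>\<infinity>k. ennreal (a k) * (\<integral>\<^sup>+ w. ennreal \<bar>fst w - snd w\<bar> \<partial>coordinate_coupling \<pi> k))"
proof -
  have sets_\<pi>: "sets \<pi> = sets (borel \<Otimes>\<^sub>M borel)" by (rule sets_couplings[OF \<pi> laws])
  have "AE z in \<pi>. fst z \<in> unit_cube \<and> snd z \<in> unit_cube"
    using AE_couplings_fst[OF \<pi> cube(1)] AE_couplings_snd[OF \<pi> cube(2)] by eventually_elim simp
  then show ?thesis
    by (simp add: nn_integral_weighted_l1[OF a sets_\<pi>] nn_integral_coordinate_coupling[OF sets_\<pi>])
qed

lemma kantorovich_weighted_l1_eq_infsum:
  fixes \<mu> \<nu> :: "('d::countable \<Rightarrow> real) measure"
  assumes a: "\<And>k. 0 \<le> a k" "a summable_on UNIV"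
    and laws: "prob_space \<mu>" "prob_space \<nu>" "sets \<mu> = sets borel" "sets \<nu> = sets borel"
    and cube: "AE y in \<mu>. y \<in> unit_cube" "AE y in \<nu>. y \<in> unit_cube"
    and \<pi>: "\<pi> \<in> couplings \<mu> \<nu>"
    and ordered: "\<And>k. (AE z in \<pi>. fst z k \<le> snd z k) \<or> (AE z in \<pi>. snd z k \<le> fst z k)"
  shows "kantorovich (weighted_l1 a) \<mu> \<nu> =
    (\<Sum>\<^sub>\<infinity>k. ennreal (a k) *
       kantorovich (\<lambda>s t. \<bar>s - t\<bar>) (distr \<mu> borel (\<lambda>y. y k)) (distr \<nu> borel (\<lambda>y. y k)))"
    (is "_ = (\<Sum>\<^sub>\<infinity>k. ennreal (a k) * ?K k)")
proof (rule antisym)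
  have "kantorovich (weighted_l1 a) \<mu> \<nu> \<le> (\<integral>\<^sup>+ z. ennreal (weighted_l1 a (fst z) (snd z)) \<partial>\<pi>)"
    unfolding kantorovich_def by (rule INF_lower[OF \<pi>])
  also have "\<dots> = (\<Sum>\<^sub>\<infinity>k. ennreal (a k) * (\<integral>\<^sup>+ w. ennreal \<bar>fst w - snd w\<bar> \<partial>coordinate_coupling \<pi> k))"
    by (rule nn_integral_weighted_l1_couplings[OF a laws(3,4) cube \<pi>])
  also have "\<dots> = (\<Sum>\<^sub>\<infinity>k. ennreal (a k) * ?K k)"
  proof (intro infsum_cong arg_cong2[where f="(*)"] refl)
    fix k
    have sets_\<pi>: "sets \<pi> = sets (borel \<Otimes>\<^sub>M borel)" by (rule sets_couplings[OF \<pi> laws(3,4)])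
    have h: "(\<lambda>z. (fst z k, snd z k)) \<in> \<pi> \<rightarrow>\<^sub>M borel \<Otimes>\<^sub>M borel"
      unfolding measurable_cong_sets[OF sets_\<pi> refl] by measurable
    have le: "{w \<in> space (borel \<Otimes>\<^sub>M borel). fst w \<le> snd w} \<in> sets (borel \<Otimes>\<^sub>M borel :: (real \<times> real) measure)"
      "{w \<in> space (borel \<Otimes>\<^sub>M borel). snd w \<le> fst w} \<in> sets (borel \<Otimes>\<^sub>M borel :: (real \<times> real) measure)"
      by measurable
    have "(AE w in coordinate_coupling \<pi> k. fst w \<le> snd w) \<or>
        (AE w in coordinate_coupling \<pi> k. snd w \<le> fst w)"
      using ordered[of k] unfolding coordinate_coupling_def AE_distr_iff[OF h le(1)] AE_distr_iff[OF h le(2)]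
      by simp
    from kantorovich_abs_eq_ordered_coupling[OF couplings_coordinate_coupling[OF \<pi> laws(3,4)]
        integrable_distr_component[OF laws(1,3) cube(1)] integrable_distr_component[OF laws(2,4) cube(2)] this]
    show "(\<integral>\<^sup>+ w. ennreal \<bar>fst w - snd w\<bar> \<partial>coordinate_coupling \<pi> k) = ?K k" ..
  qed
  finally show "kantorovich (weighted_l1 a) \<mu> \<nu> \<le> (\<Sum>\<^sub>\<infinity>k. ennreal (a k) * ?K k)" .
next
  show "(\<Sum>\<^sub>\<infinity>k. ennreal (a k) * ?K k) \<le> kantorovich (weighted_l1 a) \<mu> \<nu>"
    unfolding kantorovich_def[of "weighted_l1 a"]
  proof (rule INF_greatest)
    fix \<pi>' assume \<pi>': "\<pi>' \<in> couplings \<mu> \<nu>"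
    have "?K k \<le> (\<integral>\<^sup>+ w. ennreal \<bar>fst w - snd w\<bar> \<partial>coordinate_coupling \<pi>' k)" for k
      unfolding kantorovich_def by (intro INF_lower couplings_coordinate_coupling[OF \<pi>' laws(3,4)])
    then have "(\<Sum>\<^sub>\<infinity>k. ennreal (a k) * ?K k) \<le>
        (\<Sum>\<^sub>\<infinity>k. ennreal (a k) * (\<integral>\<^sup>+ w. ennreal \<bar>fst w - snd w\<bar> \<partial>coordinate_coupling \<pi>' k))"
      by (intro infsum_mono nonneg_summable_on_complete mult_left_mono) simp_all
    also have "\<dots> = (\<integral>\<^sup>+ z. ennreal (weighted_l1 a (fst z) (snd z)) \<partial>\<pi>')"
      by (rule nn_integral_weighted_l1_couplings[OF a laws(3,4) cube \<pi>', symmetric])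
    finally show "(\<Sum>\<^sub>\<infinity>k. ennreal (a k) * ?K k) \<le> (\<integral>\<^sup>+ z. ennreal (weighted_l1 a (fst z) (snd z)) \<partial>\<pi>')" .
  qed
qed

section \<open>Order-preserving couplings of the chain\<close>

lemma support_of_in_borel[measurable]: "support_of (\<mu> :: 'a::topological_space measure) \<in> sets borel"
  by (rule borel_closed[OF closed_support_of])

lemma markov_cubeD:
  assumes "markov_cube mu P"
  shows markov_cube_kernel: "i < 0 \<Longrightarrow> P i \<in> borel \<rightarrow>\<^sub>M prob_algebra borel"
    and markov_cube_support_step:
      "i < 0 \<Longrightarrow> y \<in> support_of (mu i) \<Longrightarrow> AE z in P i y. z \<in> support_of (mu (i + 1))"
    and markov_cube_support_subset: "i \<le> 0 \<Longrightarrow> support_of (mu i) \<subseteq> unit_cube"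
proof -
  show "i < 0 \<Longrightarrow> P i \<in> borel \<rightarrow>\<^sub>M prob_algebra borel"
    and "i < 0 \<Longrightarrow> y \<in> support_of (mu i) \<Longrightarrow> AE z in P i y. z \<in> support_of (mu (i + 1))"
    using assms unfolding markov_cube_def by auto
  show "support_of (mu i) \<subseteq> unit_cube" if "i \<le> 0"
  proof (rule support_of_subset[OF _ _ closed_unit_cube])
    show "sets (mu i) = sets borel" and "AE y in mu i. y \<in> unit_cube"
      using assms that unfolding markov_cube_def unit_cube_def by auto
  qed
qed

lemma cond_law_in_prob_algebra:
  assumes "markov_cube mu P" and "l \<le> n" and "n \<le> 0"
  shows "cond_law P borel l n x \<in> space (prob_algebra borel)"
  unfolding cond_law_def using assms
  by (intro kiter_in_prob_algebra markov_cube_kernel[OF assms(1)]) auto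

lemma AE_cond_law_support:
  assumes "markov_cube mu P" and "x \<in> support_of (mu l)" and "l \<le> n" and "n \<le> 0"
  shows "AE y in cond_law P borel l n x. y \<in> support_of (mu n)"
  unfolding cond_law_def using AE_kiter_invariant[of l "nat (n - l)" P borel "\<lambda>i. support_of (mu i)" x] assms
  by (simp add: markov_cube_kernel markov_cube_support_step)

lemma distr_cond_law_component:
  assumes "markov_cube mu P" and "strongly_monotonic mu P Q"
    and "x \<in> support_of (mu l)" and "l \<le> n" and "n \<le> 0"
  shows "distr (cond_law P borel l n x) borel (\<lambda>y. y k) = cond_law (Q k) borel l n (x k)"
  using distr_kiter[of l "nat (n - l)" P borel "Q k" borel "\<lambda>y. y k" "\<lambda>i. support_of (mu i)" x] assms
  by (simp add: cond_law_def markov_cube_kernel markov_cube_support_step strongly_monotonic_def)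

definition monotone_coupling_kernel ::
    "(int \<Rightarrow> ('d \<Rightarrow> real) measure) \<Rightarrow> (int \<Rightarrow> ('d \<Rightarrow> real) \<Rightarrow> ('d \<Rightarrow> real) measure) \<Rightarrow> int \<Rightarrow>
     (('d \<Rightarrow> real) \<times> ('d \<Rightarrow> real) \<Rightarrow> (('d \<Rightarrow> real) \<times> ('d \<Rightarrow> real)) measure) \<Rightarrow> bool" where
  "monotone_coupling_kernel mu P n C \<longleftrightarrow>
     C \<in> (borel \<Otimes>\<^sub>M borel) \<rightarrow>\<^sub>M prob_algebra (borel \<Otimes>\<^sub>M borel) \<and>
     (\<forall>x\<in>support_of (mu n). \<forall>x'\<in>support_of (mu n).
        distr (C (x, x')) borel fst = P n x \<and> distr (C (x, x')) borel snd = P n x' \<and>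
        (\<forall>k. (x k \<le> x' k \<longrightarrow> (AE z in C (x, x'). fst z k \<le> snd z k)) \<and>
             (x k \<ge> x' k \<longrightarrow> (AE z in C (x, x'). fst z k \<ge> snd z k))))"

lemma monotonic_iff_monotone_coupling_kernel:
  "monotonic mu P \<longleftrightarrow> (\<forall>n<0. \<exists>C. monotone_coupling_kernel mu P n C)"
  unfolding monotonic_def monotone_coupling_kernel_def ..

definition ordered_like :: "('d \<Rightarrow> real) \<Rightarrow> ('d \<Rightarrow> real) \<Rightarrow> (('d \<Rightarrow> real) \<times> ('d \<Rightarrow> real)) set" where
  "ordered_like x x' =
     {z. \<forall>k. (x k \<le> x' k \<longrightarrow> fst z k \<le> snd z k) \<and> (x' k \<le> x k \<longrightarrow> snd z k \<le> fst z k)}"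

lemma ordered_like_in_borel[measurable]:
  "ordered_like x x' \<in> sets (borel \<Otimes>\<^sub>M borel :: (('d::countable \<Rightarrow> real) \<times> ('d \<Rightarrow> real)) measure)"
proof -
  have "Measurable.pred (borel \<Otimes>\<^sub>M borel :: (('d \<Rightarrow> real) \<times> ('d \<Rightarrow> real)) measure)
      (\<lambda>z. \<forall>k. (x k \<le> x' k \<longrightarrow> fst z k \<le> snd z k) \<and> (x' k \<le> x k \<longrightarrow> snd z k \<le> fst z k))"
    by measurable
  then show ?thesis by (simp add: ordered_like_def pred_def space_pair_measure)
qed

lemma AE_monotone_coupling_kernel_ordered_like:
  assumes mc: "markov_cube mu P" and C: "monotone_coupling_kernel mu P i C" and "i < 0"
    and z: "z \<in> (support_of (mu i) \<times> support_of (mu i)) \<inter> ordered_like x x'"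
  shows "AE w in C z. w \<in> (support_of (mu (i + 1)) \<times> support_of (mu (i + 1))) \<inter> ordered_like x x'"
proof -
  obtain y y' where z_eq: "z = (y, y')" and y: "y \<in> support_of (mu i)" "y' \<in> support_of (mu i)"
    using z by auto
  have sets_C: "sets (C z) = sets (borel \<Otimes>\<^sub>M borel)"
    using C measurable_space[of C "borel \<Otimes>\<^sub>M borel" "prob_algebra (borel \<Otimes>\<^sub>M borel)" z]
    unfolding monotone_coupling_kernel_def by (simp add: space_prob_algebra space_pair_measure)
  have marginals: "distr (C z) borel fst = P i y" "distr (C z) borel snd = P i y'"
    using C y unfolding monotone_coupling_kernel_def z_eq by auto
  have "AE y in distr (C z) borel fst. y \<in> support_of (mu (i + 1))"
    unfolding marginals using markov_cube_support_step[OF mc \<open>i < 0\<close> y(1)] .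
  then have fst: "AE w in C z. fst w \<in> support_of (mu (i + 1))"
    by (rule AE_distrD[rotated]) (simp add: measurable_cong_sets[OF sets_C refl])
  have "AE y in distr (C z) borel snd. y \<in> support_of (mu (i + 1))"
    unfolding marginals using markov_cube_support_step[OF mc \<open>i < 0\<close> y(2)] .
  then have snd: "AE w in C z. snd w \<in> support_of (mu (i + 1))"
    by (rule AE_distrD[rotated]) (simp add: measurable_cong_sets[OF sets_C refl])
  have "AE w in C z. (x k \<le> x' k \<longrightarrow> fst w k \<le> snd w k) \<and> (x' k \<le> x k \<longrightarrow> snd w k \<le> fst w k)" for k
  proof -
    have order: "(y k \<le> y' k \<longrightarrow> (AE w in C z. fst w k \<le> snd w k)) \<and>
        (y' k \<le> y k \<longrightarrow> (AE w in C z. snd w k \<le> fst w k))"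
      using C y unfolding monotone_coupling_kernel_def z_eq by auto
    moreover have "(x k \<le> x' k \<longrightarrow> y k \<le> y' k) \<and> (x' k \<le> x k \<longrightarrow> y' k \<le> y k)"
      using z unfolding ordered_like_def z_eq by auto
    ultimately show ?thesis
      by (cases "x k \<le> x' k"; cases "x' k \<le> x k") (auto elim!: eventually_mono)
  qed
  then have "AE w in C z. w \<in> ordered_like x x'"
    unfolding ordered_like_def by (simp add: AE_all_countable)
  with fst snd show ?thesis by eventually_elim auto
qed

lemma kiter_monotone_coupling_kernel:
  fixes C :: "int \<Rightarrow> ('d::countable \<Rightarrow> real) \<times> ('d \<Rightarrow> real) \<Rightarrow> (('d \<Rightarrow> real) \<times> ('d \<Rightarrow> real)) measure"
  assumes mc: "markov_cube mu P" and C: "\<forall>i<0. monotone_coupling_kernel mu P i (C i)"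
    and x: "x \<in> support_of (mu l)" "x' \<in> support_of (mu l)" and j: "l + int j \<le> 0"
  shows "kiter C (borel \<Otimes>\<^sub>M borel) l j (x, x') \<in> space (prob_algebra (borel \<Otimes>\<^sub>M borel))"
    and "AE z in kiter C (borel \<Otimes>\<^sub>M borel) l j (x, x'). z \<in> ordered_like x x'"
    and "distr (kiter C (borel \<Otimes>\<^sub>M borel) l j (x, x')) borel fst = kiter P borel l j x"
    and "distr (kiter C (borel \<Otimes>\<^sub>M borel) l j (x, x')) borel snd = kiter P borel l j x'"
proof -
  \<comment> \<open>C i has the right marginals only on the support of mu i, so the invariant includes it.\<close>
  let ?S = "\<lambda>i. (support_of (mu i) \<times> support_of (mu i)) \<inter> ordered_like x x'"
  have kernel: "C i \<in> borel \<Otimes>\<^sub>M borel \<rightarrow>\<^sub>M prob_algebra (borel \<Otimes>\<^sub>M borel)" if "i < l + int j" for i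
    using C that j unfolding monotone_coupling_kernel_def by simp
  have S: "?S i \<in> sets (borel \<Otimes>\<^sub>M borel)" for i
    by measurable
  have step: "AE w in C i z. w \<in> ?S (i + 1)" if "i < l + int j" "z \<in> ?S i" for i z
  proof -
    have "i < 0" using that(1) j by simp
    with C have "monotone_coupling_kernel mu P i (C i)" by simp
    from AE_monotone_coupling_kernel_ordered_like[OF mc this \<open>i < 0\<close> that(2)] show ?thesis .
  qed
  have start: "(x, x') \<in> ?S l"
    using x unfolding ordered_like_def by auto
  have marginals: "distr (C i z) borel fst = P i (fst z)" "distr (C i z) borel snd = P i (snd z)"
    if i: "i < l + int j" and z: "z \<in> ?S i" for i z
  proof -
    obtain y y' where "z = (y, y')" "y \<in> support_of (mu i)" "y' \<in> support_of (mu i)"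
      using z by auto
    moreover have "monotone_coupling_kernel mu P i (C i)" using C i j by simp
    ultimately show "distr (C i z) borel fst = P i (fst z)" "distr (C i z) borel snd = P i (snd z)"
      unfolding monotone_coupling_kernel_def by simp_all
  qed
  have P: "P i \<in> borel \<rightarrow>\<^sub>M prob_algebra borel" if "i < l + int j" for i
    using markov_cube_kernel[OF mc] that j by simp
  show "kiter C (borel \<Otimes>\<^sub>M borel) l j (x, x') \<in> space (prob_algebra (borel \<Otimes>\<^sub>M borel))"
    using kiter_in_prob_algebra[of l j C "borel \<Otimes>\<^sub>M borel" "(x, x')"] kernel
      sets.sets_into_space[OF S] start by blast
  have "AE z in kiter C (borel \<Otimes>\<^sub>M borel) l j (x, x'). z \<in> ?S (l + int j)"
    using AE_kiter_invariant[of l j C "borel \<Otimes>\<^sub>M borel" ?S "(x, x')"] kernel S step start by blast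
  then show "AE z in kiter C (borel \<Otimes>\<^sub>M borel) l j (x, x'). z \<in> ordered_like x x'"
    by eventually_elim simp
  show "distr (kiter C (borel \<Otimes>\<^sub>M borel) l j (x, x')) borel fst = kiter P borel l j x"
    using distr_kiter[of l j C "borel \<Otimes>\<^sub>M borel" P borel fst ?S "(x, x')"]
      kernel P S step marginals(1) start by simp
  show "distr (kiter C (borel \<Otimes>\<^sub>M borel) l j (x, x')) borel snd = kiter P borel l j x'"
    using distr_kiter[of l j C "borel \<Otimes>\<^sub>M borel" P borel snd ?S "(x, x')"]
      kernel P S step marginals(2) start by simp
qed

lemma ordered_coupling_cond_law:
  assumes mc: "markov_cube mu P" and "monotonic mu P"
    and x: "x \<in> support_of (mu l)" "x' \<in> support_of (mu l)" and "l \<le> n" and "n \<le> 0"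
  obtains \<pi> where "\<pi> \<in> couplings (cond_law P borel l n x) (cond_law P borel l n x')"
    and "\<And>k. (AE z in \<pi>. fst z k \<le> snd z k) \<or> (AE z in \<pi>. snd z k \<le> fst z k)"
proof -
  obtain C where C: "\<forall>i<0. monotone_coupling_kernel mu P i (C i)"
    using \<open>monotonic mu P\<close> unfolding monotonic_iff_monotone_coupling_kernel by metis
  let ?J = "kiter C (borel \<Otimes>\<^sub>M borel) l (nat (n - l)) (x, x')"
  have j: "l + int (nat (n - l)) \<le> 0" using assms by simp
  note J = kiter_monotone_coupling_kernel[OF mc C x j]
  have laws: "sets (cond_law P borel l n x) = sets borel" "sets (cond_law P borel l n x') = sets borel"
    using cond_law_in_prob_algebra[OF mc \<open>l \<le> n\<close> \<open>n \<le> 0\<close>] by (simp_all add: space_prob_algebra)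
  have coupling: "?J \<in> couplings (cond_law P borel l n x) (cond_law P borel l n x')"
    unfolding couplings_def
  proof (intro CollectI conjI)
    show "sets ?J = sets (cond_law P borel l n x \<Otimes>\<^sub>M cond_law P borel l n x')"
      using J(1) sets_pair_measure_cong[OF laws] by (simp add: space_prob_algebra)
    show "prob_space ?J" using J(1) by (simp add: space_prob_algebra)
    show "distr ?J (cond_law P borel l n x) fst = cond_law P borel l n x"
      using J(3) laws(1) by (simp add: cond_law_def cong: distr_cong)
    show "distr ?J (cond_law P borel l n x') snd = cond_law P borel l n x'"
      using J(4) laws(2) by (simp add: cond_law_def cong: distr_cong)
  qed
  have order: "(AE z in ?J. fst z k \<le> snd z k) \<or> (AE z in ?J. snd z k \<le> fst z k)" for k
  proof (cases "x k \<le> x' k")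
    case True
    from J(2) have "AE z in ?J. fst z k \<le> snd z k"
      by eventually_elim (use True in \<open>simp add: ordered_like_def\<close>)
    then show ?thesis ..
  next
    case False
    from J(2) have "AE z in ?J. snd z k \<le> fst z k"
      by eventually_elim (use False in \<open>simp add: ordered_like_def\<close>)
    then show ?thesis ..
  qed
  show thesis
    by (rule that[OF coupling]) (rule order)
qed

theorem lemma4p6:
  fixes mu :: "int \<Rightarrow> ('d::countable \<Rightarrow> real) measure"
    and P :: "int \<Rightarrow> ('d \<Rightarrow> real) \<Rightarrow> ('d \<Rightarrow> real) measure"
    and Q :: "'d \<Rightarrow> int \<Rightarrow> real \<Rightarrow> real measure"
    and a :: "'d \<Rightarrow> real"
    and l n :: int
    and x x' :: "'d \<Rightarrow> real"
  assumes "markov_cube mu P"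
    and "strongly_monotonic mu P Q"
    and "\<forall>k. a k > 0"
    and "(a has_sum 1) UNIV"
    and "l \<le> n" and "n \<le> 0"
    and "x \<in> support_of (mu l)" and "x' \<in> support_of (mu l)"
  shows "kantorovich (weighted_l1 a) (cond_law P borel l n x) (cond_law P borel l n x') =
    (\<Sum>\<^sub>\<infinity>k. ennreal (a k) *
       kantorovich (\<lambda>s t. \<bar>s - t\<bar>) (cond_law (Q k) borel l n (x k)) (cond_law (Q k) borel l n (x' k)))"
proof -
  have "monotonic mu P" using assms(2) unfolding strongly_monotonic_def ..
  obtain \<pi> where \<pi>: "\<pi> \<in> couplings (cond_law P borel l n x) (cond_law P borel l n x')"
    and ordered: "\<And>k. (AE z in \<pi>. fst z k \<le> snd z k) \<or> (AE z in \<pi>. snd z k \<le> fst z k)"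
    using ordered_coupling_cond_law[OF assms(1) \<open>monotonic mu P\<close> assms(7,8,5,6)] by blast
  have law: "prob_space (cond_law P borel l n y)" "sets (cond_law P borel l n y) = sets borel" for y
    using cond_law_in_prob_algebra[OF assms(1,5,6)] by (simp_all add: space_prob_algebra)
  have cube: "AE z in cond_law P borel l n y. z \<in> unit_cube" if "y \<in> support_of (mu l)" for y
    using AE_cond_law_support[OF assms(1) that assms(5,6)] markov_cube_support_subset[OF assms(1,6)]
    by (auto elim!: eventually_mono)
  have a: "\<And>k. 0 \<le> a k" "a summable_on UNIV"
    using assms(3,4) by (auto simp: less_imp_le summable_on_def)
  from kantorovich_weighted_l1_eq_infsum[OF a law(1) law(1) law(2) law(2) cube[OF assms(7)] cube[OF assms(8)] \<pi> ordered]
  show ?thesis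
    by (simp add: distr_cond_law_component[OF assms(1,2,7,5,6)] distr_cond_law_component[OF assms(1,2,8,5,6)])
qed

end
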